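(* Let $A$ be a $C^*$-algebra and $J$ a norm-dense right ideal in $A$. Suppose that there exists a linear functional $\tau:J\to\mathbb{C}$ such that (i) $\tau(ab)=\tau(ba)$ for all $a,b\in J$, and (ii) if $c\in J$ and $\tau(c^*c)=0$ then $c=0$. Then $A$ is quasi-directly finite.
   Context: For $a,b$ in a ring $R$ (not necessarily unital), $a\diamond b := a+b-ab$; if $a\diamond b=0$ then $a$ is a left quasi-inverse of $b$ and $b$ a right quasi-inverse of $a$. A ring $R$ is quasi-directly finite if every element having a left quasi-inverse in $R$ also has a right quasi-inverse in $R$; an algebra is quasi-directly finite if its underlying ring is. *)

theory Defs
  imports "HOL-Analysis.Analysis"
begin

class complex_vector = real_vector +
  fixes cscale :: "complex \<Rightarrow> 'a \<Rightarrow> 'a" (infixr \<open>*\<^sub>C\<close> 75)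
  assumes cscale_add_right: "a *\<^sub>C (x + y) = a *\<^sub>C x + a *\<^sub>C y"
    and cscale_add_left: "(a + b) *\<^sub>C x = a *\<^sub>C x + b *\<^sub>C x"
    and cscale_cscale: "a *\<^sub>C (b *\<^sub>C x) = (a * b) *\<^sub>C x"
    and cscale_one: "1 *\<^sub>C x = x"
    and scaleR_cscale: "scaleR r x = complex_of_real r *\<^sub>C x"

text \<open>The underlying ring is the
  (non-unital) class ring contained in real_normed_algebra, which also
  provides the submultiplicativity of the norm.\<close>
class cstar_algebra = complex_vector + real_normed_algebra + banach +
  fixes cstar :: "'a \<Rightarrow> 'a"
  assumes norm_cscale: "norm (a *\<^sub>C x) = cmod a * norm x"
    and cscale_mult_left: "(a *\<^sub>C x) * y = a *\<^sub>C (x * y)"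
    and cscale_mult_right: "x * (a *\<^sub>C y) = a *\<^sub>C (x * y)"
    and cstar_cstar: "cstar (cstar x) = x"
    and cstar_add: "cstar (x + y) = cstar x + cstar y"
    and cstar_cscale: "cstar (a *\<^sub>C x) = cnj a *\<^sub>C cstar x"
    and cstar_mult: "cstar (x * y) = cstar y * cstar x"
    and cstar_identity: "norm (cstar x * x) = norm x ^ 2"

definition qcirc :: "'a::ring \<Rightarrow> 'a \<Rightarrow> 'a" where
  "qcirc a b = a + b - a * b"

definition quasi_directly_finite :: "'a::ring itself \<Rightarrow> bool" where
  "quasi_directly_finite _ \<longleftrightarrow>
     (\<forall>b::'a. (\<exists>a. qcirc a b = 0) \<longrightarrow> (\<exists>c. qcirc b c = 0))"

definition right_ideal :: "'a::cstar_algebra set \<Rightarrow> bool" where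
  "right_ideal J \<longleftrightarrow> 0 \<in> J \<and> (\<forall>x\<in>J. \<forall>y\<in>J. x + y \<in> J)
     \<and> (\<forall>c. \<forall>x\<in>J. c *\<^sub>C x \<in> J) \<and> (\<forall>x\<in>J. \<forall>a. x * a \<in> J)"

end

theory Submission
  imports Defs
begin

text \<open>Approximate a left quasi-invertible a (with a \<diamond> b = 0) by some a' \<in> J. A small
  perturbation of b gives b' with a' \<diamond> b' = 0, and then b' \<in> J. The element
  p = b' \<diamond> a' = a'b' - b'a' is an idempotent of J with \<tau> p = 0. Replacing p by a
  self-adjoint idempotent q with pq = q and qp = p, the trace property gives
  \<tau>(q^* q) = \<tau>(q) = \<tau>(pq) = \<tau>(qp) = \<tau>(p) = 0, so q = 0 by faithfulness, whence p = 0.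
  Thus b' \<diamond> a' = 0, and since a is close to a', the element b' \<diamond> a is small and
  hence left quasi-invertible; this forces b \<diamond> a = 0.\<close>

section \<open>The circle operation in a ring\<close>

lemma qcirc_assoc: "qcirc (qcirc a b) c = qcirc a (qcirc b (c::'a::ring))"
  unfolding qcirc_def by (simp add: algebra_simps)

lemma qcirc_0_left [simp]: "qcirc 0 a = (a::'a::ring)"
  unfolding qcirc_def by simp

lemma qcirc_0_right [simp]: "qcirc a 0 = (a::'a::ring)"
  unfolding qcirc_def by simp

lemma qcirc_left_right_eq:
  fixes l m r :: "'a::ring"
  assumes "qcirc l m = 0" and "qcirc m r = 0"
  shows "l = r"
  by (metis assms qcirc_0_left qcirc_0_right qcirc_assoc)

lemma qcirc_right_inverse_qcirc:
  fixes x y r s :: "'a::ring"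
  assumes "qcirc x r = 0" and "qcirc y s = 0"
  shows "qcirc (qcirc x y) (qcirc s r) = 0"
  by (metis assms qcirc_0_left qcirc_assoc)

lemma qcirc_inverse_commute:
  fixes x m g :: "'a::ring"
  assumes xm: "x * m = m * x" and "qcirc m g = 0" and "qcirc g m = 0"
  shows "x * g = g * x"
proof -
  have "x * g - g * x = (x * g - g * x) - (x - g * x) * qcirc m g + qcirc g m * (x - x * g)"
    using assms by simp
  also have "\<dots> = (m*x - x*m) + (x*m - m*x)*g + g*(x*m - m*x) - g*(x*m - m*x)*g"
    unfolding qcirc_def by (simp add: algebra_simps)
  finally show ?thesis
    unfolding xm by simp
qed

lemma qcirc_swap_idempotent:
  fixes a b :: "'a::ring"
  assumes "qcirc a b = 0"
  shows "qcirc b a * qcirc b a = qcirc b a"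
proof -
  have "qcirc (qcirc b a) (qcirc b a) = qcirc b a"
    by (metis assms qcirc_0_left qcirc_assoc)
  then show ?thesis
    unfolding qcirc_def by (simp add: algebra_simps)
qed

text \<open>If some c \<diamond> a has a left quasi-inverse k, then k \<diamond> c is a left quasi-inverse of a,
  so it coincides with every right quasi-inverse b of a.\<close>

lemma qcirc_right_inverse_is_left:
  fixes a b c k :: "'a::ring"
  assumes ab: "qcirc a b = 0" and k: "qcirc k (qcirc c a) = 0"
  shows "qcirc b a = 0"
proof -
  have "qcirc (qcirc k c) a = 0"
    using k by (simp add: qcirc_assoc)
  then have "qcirc k c = b"
    using ab by (rule qcirc_left_right_eq)
  then show ?thesis
    using k by (metis qcirc_assoc)
qed

section \<open>Quasi-inverses in Banach algebras\<close>

lemma norm_qcirc_le: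
  fixes x y :: "'a::real_normed_algebra"
  shows "norm (qcirc x y) \<le> (1 + norm x) * (1 + norm y) - 1"
proof -
  have "norm (qcirc x y) \<le> norm x + norm y + norm (x * y)"
    unfolding qcirc_def using norm_triangle_ineq4[of "x + y" "x * y"] norm_triangle_ineq[of x y]
    by linarith
  also have "\<dots> \<le> norm x + norm y + norm x * norm y"
    by (simp add: norm_mult_ineq)
  finally show ?thesis
    by (simp add: algebra_simps)
qed

lemma norm_diff_mult_left_le:
  fixes x y :: "'a::real_normed_algebra"
  shows "norm (x - y * x) \<le> norm x * (1 + norm y)"
  using norm_triangle_ineq4[of x "y * x"] norm_mult_ineq[of y x] by (simp add: algebra_simps)

lemma norm_diff_mult_right_le:
  fixes x y :: "'a::real_normed_algebra"
  shows "norm (x - x * y) \<le> norm x * (1 + norm y)"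
  using norm_triangle_ineq4[of x "x * y"] norm_mult_ineq[of x y] by (simp add: algebra_simps)

text \<open>The right quasi-inverse is the fixed point of g \<mapsto> (t g + x g - x)/(1 + t), a
  contraction under the hypothesis; the shift t \<ge> 0 is needed for skew-adjoint x.\<close>

lemma right_quasi_inverse_contraction:
  fixes x :: "'a::{real_normed_algebra, banach}"
  assumes t: "t \<ge> 0" and c: "0 \<le> c" "c < 1"
    and bound: "\<And>y. norm (t *\<^sub>R y + x * y) \<le> c * (1 + t) * norm y"
  shows "\<exists>g. qcirc x g = 0"
proof -
  define f where "f g = inverse (1 + t) *\<^sub>R (t *\<^sub>R g + x * g - x)" for g
  have "dist (f g1) (f g2) \<le> c * dist g1 g2" for g1 g2
  proof -
    have "f g1 - f g2 = inverse (1 + t) *\<^sub>R (t *\<^sub>R (g1 - g2) + x * (g1 - g2))"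
      unfolding f_def by (simp add: algebra_simps)
    then have "dist (f g1) (f g2) = inverse (1 + t) * norm (t *\<^sub>R (g1 - g2) + x * (g1 - g2))"
      using t by (simp add: dist_norm)
    also have "\<dots> \<le> inverse (1 + t) * (c * (1 + t) * norm (g1 - g2))"
      using bound t by (intro mult_left_mono) auto
    also have "\<dots> = c * dist g1 g2"
      using t by (simp add: dist_norm)
    finally show ?thesis .
  qed
  then obtain g where "f g = g"
    using banach_fix_type[OF c] by blast
  then have "(1 + t) *\<^sub>R f g = (1 + t) *\<^sub>R g"
    by simp
  then have "t *\<^sub>R g + x * g - x = (1 + t) *\<^sub>R g"
    using t unfolding f_def by simp
  then have "x * g - x = g"
    by (simp add: algebra_simps)
  then have "qcirc x g = 0"
    unfolding qcirc_def by (simp add: algebra_simps)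
  then show ?thesis ..
qed

lemma small_right_quasi_inverse:
  fixes x :: "'a::{real_normed_algebra, banach}"
  assumes x: "norm x < 1"
  shows "\<exists>h. qcirc x h = 0 \<and> norm h * (1 - norm x) \<le> norm x"
proof -
  have "\<exists>h. qcirc x h = 0"
    by (rule right_quasi_inverse_contraction[of 0 "norm x"]) (use x in \<open>auto simp: norm_mult_ineq\<close>)
  then obtain h where xh: "qcirc x h = 0" ..
  then have "h = x * h - x"
    unfolding qcirc_def by (simp add: algebra_simps)
  then have "norm h \<le> norm (x * h) + norm x"
    by (metis norm_triangle_ineq4)
  then have "norm h \<le> norm x * norm h + norm x"
    using norm_mult_ineq[of x h] by linarith
  then show ?thesis
    using xh by (auto simp: algebra_simps)
qed

lemma right_quasi_inverse_perturb:
  fixes a b a' :: "'a::{real_normed_algebra, banach}"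
  assumes ab: "qcirc a b = 0" and close: "norm (a' - a) * (1 + norm b) < 1/4"
  shows "\<exists>b'. qcirc a' b' = 0 \<and> norm b' \<le> 2 * (1 + norm b)"
proof -
  have "qcirc a' b = (a' - a) - (a' - a) * b"
    using ab unfolding qcirc_def by (simp add: algebra_simps)
  then have "norm (qcirc a' b) \<le> norm (a' - a) * (1 + norm b)"
    by (simp only: norm_diff_mult_right_le)
  then have "norm (qcirc a' b) < 1/4"
    using close by linarith
  then obtain h where h: "qcirc (qcirc a' b) h = 0"
    and "norm h * (1 - norm (qcirc a' b)) \<le> norm (qcirc a' b)"
    using small_right_quasi_inverse[of "qcirc a' b"] by auto
  moreover have "norm h * (3/4) \<le> norm h * (1 - norm (qcirc a' b))"
    using \<open>norm (qcirc a' b) < 1/4\<close> by (intro mult_left_mono) auto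
  ultimately have "norm h \<le> 1"
    using \<open>norm (qcirc a' b) < 1/4\<close> by linarith
  then have "(1 + norm b) * (1 + norm h) \<le> (1 + norm b) * 2"
    by (intro mult_left_mono) auto
  then have "norm (qcirc b h) \<le> 2 * (1 + norm b)"
    using norm_qcirc_le[of b h] by linarith
  moreover have "qcirc a' (qcirc b h) = 0"
    using h by (simp add: qcirc_assoc)
  ultimately show ?thesis
    by blast
qed

section \<open>C*-algebras\<close>

lemma cscale_minus_one: "(-1::complex) *\<^sub>C (x::'a::complex_vector) = - x"
  by (metis scaleR_cscale of_real_1 of_real_minus scaleR_minus1_left)

lemma cstar_zero [simp]: "cstar (0::'a::cstar_algebra) = 0"
  by (metis add_cancel_right_right cstar_add)

lemma cstar_minus: "cstar (- x::'a::cstar_algebra) = - cstar x"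
  by (metis add.right_inverse add_eq_0_iff cstar_add cstar_zero)

lemma cstar_diff: "cstar (x - y::'a::cstar_algebra) = cstar x - cstar y"
  by (metis cstar_add cstar_minus diff_conv_add_uminus)

lemma cstar_scaleR: "cstar (r *\<^sub>R x::'a::cstar_algebra) = r *\<^sub>R cstar x"
  by (simp add: scaleR_cscale cstar_cscale)

lemma cstar_qcirc: "cstar (qcirc x y) = qcirc (cstar y) (cstar (x::'a::cstar_algebra))"
  unfolding qcirc_def by (simp add: cstar_diff cstar_add cstar_mult algebra_simps)

lemma norm_cstar: "norm (cstar x) = norm (x::'a::cstar_algebra)"
proof -
  have le: "norm y \<le> norm (cstar y)" for y :: 'a
  proof (cases "y = 0")
    case False
    have "norm y ^ 2 \<le> norm (cstar y) * norm y"
      by (metis cstar_identity norm_mult_ineq)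
    then show ?thesis
      using False by (simp add: power2_eq_square)
  qed simp
  show ?thesis
    using le[of x] le[of "cstar x"] by (simp add: cstar_cstar)
qed

lemma left_quasi_inverse_cstar:
  fixes x g :: "'a::cstar_algebra"
  assumes "qcirc (cstar x) g = 0"
  shows "qcirc (cstar g) x = 0"
  using arg_cong[OF assms, of cstar] by (simp add: cstar_qcirc cstar_cstar)

lemma small_left_quasi_inverse:
  fixes y :: "'a::cstar_algebra"
  assumes "norm y < 1"
  shows "\<exists>k. qcirc k y = 0"
proof -
  obtain g where "qcirc (cstar y) g = 0"
    using small_right_quasi_inverse[of "cstar y"] assms by (auto simp: norm_cstar)
  then show ?thesis
    by (blast intro: left_quasi_inverse_cstar)
qed

text \<open>The C*-identity turns the norm of (t + w) y into that of
  y^* (t^2 - w^2) y, the cross terms cancelling since w^* = -w.\<close>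

lemma norm_shift_skew_mult_le:
  fixes w y :: "'a::cstar_algebra"
  assumes skew: "cstar w = - w"
  shows "norm (t *\<^sub>R y + w * y) ^ 2 \<le> (t^2 + norm w ^ 2) * norm y ^ 2"
proof -
  have "cstar (t *\<^sub>R y + w * y) * (t *\<^sub>R y + w * y)
      = (t^2) *\<^sub>R (cstar y * y) - cstar y * (w * w * y)"
    by (simp add: cstar_add cstar_scaleR cstar_mult skew algebra_simps power2_eq_square)
  then have "norm (t *\<^sub>R y + w * y) ^ 2 = norm ((t^2) *\<^sub>R (cstar y * y) - cstar y * (w * w * y))"
    by (metis cstar_identity)
  also have "\<dots> \<le> norm ((t^2) *\<^sub>R (cstar y * y)) + norm (cstar y * (w * w * y))"
    by (rule norm_triangle_ineq4)
  also have "norm ((t^2) *\<^sub>R (cstar y * y)) = t^2 * norm y ^ 2"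
    by (simp add: cstar_identity)
  also have "norm (cstar y * (w * w * y)) \<le> norm y * (norm w * norm w * norm y)"
  proof -
    have "norm (w * w) * norm y \<le> norm w * norm w * norm y"
      by (simp add: mult_right_mono norm_mult_ineq)
    then have "norm (w * w * y) \<le> norm w * norm w * norm y"
      using norm_mult_ineq[of "w * w" y] by linarith
    then have "norm (cstar y) * norm (w * w * y) \<le> norm y * (norm w * norm w * norm y)"
      unfolding norm_cstar by (rule mult_left_mono) simp
    then show ?thesis
      using norm_mult_ineq[of "cstar y" "w * w * y"] by linarith
  qed
  finally show ?thesis
    by (simp add: algebra_simps power2_eq_square)
qed

lemma skew_right_quasi_inverse:
  fixes w :: "'a::cstar_algebra"
  assumes skew: "cstar w = - w"
  shows "\<exists>g. qcirc w g = 0"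
proof -
  define t where "t = norm w ^ 2"
  define c where "c = sqrt (t^2 + norm w ^ 2) / (1 + t)"
  have t: "t \<ge> 0"
    by (simp add: t_def)
  have "t^2 + norm w ^ 2 < (1 + t)^2"
    by (simp add: t_def power2_eq_square algebra_simps add_pos_nonneg)
  then have "sqrt (t^2 + norm w ^ 2) < 1 + t"
    using t by (metis abs_of_nonneg add_nonneg_nonneg real_sqrt_abs real_sqrt_less_iff zero_le_one)
  then have c: "0 \<le> c" "c < 1"
    using t by (simp_all add: c_def)
  show ?thesis
  proof (rule right_quasi_inverse_contraction[OF t c])
    fix y
    have "norm (t *\<^sub>R y + w * y) \<le> sqrt ((t^2 + norm w ^ 2) * norm y ^ 2)"
      using norm_shift_skew_mult_le[OF skew] by (simp add: real_le_rsqrt)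
    also have "\<dots> = c * (1 + t) * norm y"
      using t by (simp add: c_def real_sqrt_mult)
    finally show "norm (t *\<^sub>R y + w * y) \<le> c * (1 + t) * norm y" .
  qed
qed

lemma selfadjoint_quasi_inverse:
  fixes k g :: "'a::cstar_algebra"
  assumes k: "cstar k = k" and kg: "qcirc k g = 0"
  shows "cstar g = g" and "qcirc g k = 0"
proof -
  have "qcirc (cstar g) k = 0"
    using left_quasi_inverse_cstar[of k g] kg k by simp
  then show "cstar g = g"
    using kg by (rule qcirc_left_right_eq)
  with \<open>qcirc (cstar g) k = 0\<close> show "qcirc g k = 0"
    by simp
qed

text \<open>Since w \<diamond> (-w) = w^2, the right quasi-inverses of w and -w combine.\<close>

lemma skew_square_quasi_inverse:
  fixes w :: "'a::cstar_algebra"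
  assumes skew: "cstar w = - w"
  obtains g where "qcirc (w * w) g = 0" "qcirc g (w * w) = 0" "cstar g = g"
proof -
  obtain r s where "qcirc w r = 0" "qcirc (- w) s = 0"
    using skew_right_quasi_inverse skew by (metis cstar_minus)
  moreover have "w * w = qcirc w (- w)"
    unfolding qcirc_def by simp
  ultimately have "qcirc (w * w) (qcirc s r) = 0"
    by (simp add: qcirc_right_inverse_qcirc)
  moreover have "cstar (w * w) = w * w"
    by (simp add: cstar_mult skew)
  ultimately show ?thesis
    using selfadjoint_quasi_inverse that by blast
qed

text \<open>The range projection of p: with P = p^* and k = (p - P)^2, the element
  1 - k = 1 + (p - P)^*(p - P) is invertible, and q = pP(1 - k)\<inverse> is written
  p (P - P g) with g the quasi-inverse of k.\<close>

lemma projection_of_idempotent: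
  fixes p :: "'a::cstar_algebra"
  assumes pp: "p * p = p"
  obtains q where "cstar q = q" "q * q = q" "p * q = q" "q * p = p"
proof -
  define P where "P = cstar p"
  define k where "k = (p - P) * (p - P)"
  have PP: "P * P = P"
    unfolding P_def by (metis cstar_mult pp)
  have pp2: "p * (p * x) = p * x" and PP2: "P * (P * x) = P * x" for x
    by (metis mult.assoc pp, metis mult.assoc PP)
  have "cstar (p - P) = - (p - P)"
    unfolding P_def by (simp add: cstar_diff cstar_cstar)
  then obtain g where kg: "qcirc k g = 0" and gk: "qcirc g k = 0" and gs: "cstar g = g"
    unfolding k_def by (rule skew_square_quasi_inverse)
  have k: "k = p - p * P - P * p + P"
    unfolding k_def by (simp add: algebra_simps pp PP)
  have pg: "p * g = g * p" and Pg: "P * g = g * P"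
    by (rule qcirc_inverse_commute[OF _ kg gk], simp add: k algebra_simps pp PP pp2 PP2)+
  define q where "q = p * (P - P * g)"
  have pPp: "p * P * p = p - p * k"
    unfolding k by (simp add: algebra_simps pp PP pp2 PP2)
  have "q * p = p * P * p - p * P * p * g"
    unfolding q_def by (simp add: algebra_simps pg)
  also have "\<dots> = p - p * qcirc k g"
    unfolding pPp qcirc_def by (simp add: algebra_simps)
  finally have qp: "q * p = p"
    using kg by simp
  have pq: "p * q = q"
    unfolding q_def by (simp add: pp2)
  have qq: "q * q = q"
    unfolding q_def by (metis mult.assoc q_def qp)
  have qs: "cstar q = q"
  proof -
    have "cstar q = (p - g * p) * P"
      unfolding q_def by (simp add: cstar_mult cstar_diff P_def cstar_cstar gs)
    also have "\<dots> = q"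
      unfolding q_def by (simp add: algebra_simps) (metis Pg pg mult.assoc)
    finally show ?thesis .
  qed
  show ?thesis
    by (rule that[OF qs qq pq qp])
qed

section \<open>Quasi-inverses on a dense subset\<close>

lemma left_quasi_inverse_perturb:
  fixes a b a' b' :: "'a::cstar_algebra"
  assumes ab: "qcirc a b = 0" and ba': "qcirc b' a' = 0"
    and close: "norm (a' - a) * (1 + norm b) < 1/4" and b': "norm b' \<le> 2 * (1 + norm b)"
  shows "qcirc b a = 0"
proof -
  have "qcirc b' a = (a - a') - b' * (a - a')"
    using ba' unfolding qcirc_def by (simp add: algebra_simps)
  then have "norm (qcirc b' a) \<le> norm (a - a') * (1 + norm b')"
    by (simp only: norm_diff_mult_left_le)
  moreover have "1 + norm b' \<le> 3 * (1 + norm b)"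
    using b' norm_ge_zero[of b] by (simp add: algebra_simps, linarith)
  then have "norm (a - a') * (1 + norm b') \<le> norm (a' - a) * (3 * (1 + norm b))"
    unfolding norm_minus_commute[of a] by (rule mult_left_mono) simp
  ultimately have "norm (qcirc b' a) < 1"
    using close by linarith
  then obtain k where "qcirc k (qcirc b' a) = 0"
    using small_left_quasi_inverse by blast
  with ab show ?thesis
    by (rule qcirc_right_inverse_is_left)
qed

lemma quasi_directly_finite_if_dense:
  fixes D :: "'a::cstar_algebra set"
  assumes dense: "closure D = UNIV"
    and two_sided: "\<And>a b. a \<in> D \<Longrightarrow> qcirc a b = 0 \<Longrightarrow> qcirc b a = 0"
  shows "quasi_directly_finite TYPE('a)"
  unfolding quasi_directly_finite_def
proof (intro allI impI)
  fix b :: 'a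
  assume "\<exists>a. qcirc a b = 0"
  then obtain a where ab: "qcirc a b = 0" ..
  have N: "0 < 4 * (1 + norm b)"
    by (simp add: add_pos_nonneg)
  then have "0 < 1 / (4 * (1 + norm b))"
    by simp
  moreover have "a \<in> closure D"
    using dense by simp
  ultimately obtain a' where a': "a' \<in> D" and "dist a' a < 1 / (4 * (1 + norm b))"
    unfolding closure_approachable by blast
  then have "norm (a' - a) * (4 * (1 + norm b)) < 1"
    using N by (simp add: dist_norm pos_less_divide_eq)
  then have close: "norm (a' - a) * (1 + norm b) < 1/4"
    by (simp add: algebra_simps)
  obtain b' where a'b': "qcirc a' b' = 0" and b': "norm b' \<le> 2 * (1 + norm b)"
    using right_quasi_inverse_perturb[OF ab close] by blast
  from a' a'b' have "qcirc b' a' = 0"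
    by (rule two_sided)
  then have "qcirc b a = 0"
    using left_quasi_inverse_perturb[OF ab _ close b'] by blast
  then show "\<exists>c. qcirc b c = 0" ..
qed

section \<open>Faithful traces on right ideals\<close>

locale faithful_trace =
  fixes J :: "'a::cstar_algebra set" and \<tau> :: "'a \<Rightarrow> complex"
  assumes right_ideal: "right_ideal J"
    and trace_add: "\<forall>x\<in>J. \<forall>y\<in>J. \<tau> (x + y) = \<tau> x + \<tau> y"
    and trace_cscale: "\<forall>c. \<forall>x\<in>J. \<tau> (c *\<^sub>C x) = c * \<tau> x"
    and trace_commute: "\<forall>a\<in>J. \<forall>b\<in>J. \<tau> (a * b) = \<tau> (b * a)"
    and trace_faithful: "\<forall>c\<in>J. cstar c * c \<in> J \<and> \<tau> (cstar c * c) = 0 \<longrightarrow> c = 0"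
begin

lemma add_mem: "x \<in> J \<Longrightarrow> y \<in> J \<Longrightarrow> x + y \<in> J"
  and cscale_mem: "x \<in> J \<Longrightarrow> c *\<^sub>C x \<in> J"
  and mult_mem: "x \<in> J \<Longrightarrow> x * z \<in> J"
  using right_ideal unfolding right_ideal_def by blast+

lemma diff_mem: "x \<in> J \<Longrightarrow> y \<in> J \<Longrightarrow> x - y \<in> J"
  using add_mem[of x "(-1) *\<^sub>C y"] cscale_mem[of y "-1"] by (simp add: cscale_minus_one)

lemma trace_diff:
  assumes x: "x \<in> J" and y: "y \<in> J"
  shows "\<tau> (x - y) = \<tau> x - \<tau> y"
proof -
  have "\<tau> (x + (-1) *\<^sub>C y) = \<tau> x + \<tau> ((-1) *\<^sub>C y)"
    using trace_add x cscale_mem[OF y] by blast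
  also have "\<tau> ((-1) *\<^sub>C y) = - \<tau> y"
    using trace_cscale y by simp
  finally show ?thesis
    by (simp add: cscale_minus_one)
qed

lemma idempotent_trace_zero_eq_0:
  assumes p: "p \<in> J" and pp: "p * p = p" and tp: "\<tau> p = 0"
  shows "p = 0"
proof -
  obtain q where qs: "cstar q = q" and qq: "q * q = q" and pq: "p * q = q" and qp: "q * p = p"
    using pp by (rule projection_of_idempotent)
  have q: "q \<in> J"
    using mult_mem[OF p, of q] unfolding pq .
  have "\<tau> (cstar q * q) = \<tau> (p * q)"
    by (simp add: qs qq pq)
  also have "\<dots> = \<tau> (q * p)"
    using trace_commute p q by blast
  finally have "\<tau> (cstar q * q) = 0"
    by (simp add: qp tp)
  then have "q = 0"
    using trace_faithful q qs qq by simp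
  then show ?thesis
    using qp by simp
qed

lemma quasi_inverse_two_sided:
  assumes a: "a \<in> J" and ab: "qcirc a b = 0"
  shows "qcirc b a = 0"
proof -
  have b_eq: "b = a * b - a"
    using ab unfolding qcirc_def by (simp add: algebra_simps)
  have b: "b \<in> J"
    by (subst b_eq) (intro diff_mem mult_mem a)
  have commutator: "qcirc b a = a * b - b * a"
    using ab unfolding qcirc_def by (simp add: algebra_simps)
  have "qcirc b a \<in> J"
    unfolding commutator using a b by (intro diff_mem mult_mem)
  moreover have "\<tau> (qcirc b a) = 0"
    unfolding commutator using a b trace_commute by (simp add: trace_diff mult_mem)
  ultimately show ?thesis
    by (rule idempotent_trace_zero_eq_0[OF _ qcirc_swap_idempotent[OF ab]])
qed

end

theorem proposition2p9:
  fixes J :: "'a::cstar_algebra set" and \<tau> :: "'a \<Rightarrow> complex"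
  assumes "right_ideal J"
    and "closure J = UNIV"
    and "\<forall>x\<in>J. \<forall>y\<in>J. \<tau> (x + y) = \<tau> x + \<tau> y"
    and "\<forall>c. \<forall>x\<in>J. \<tau> (c *\<^sub>C x) = c * \<tau> x"
    and "\<forall>a\<in>J. \<forall>b\<in>J. \<tau> (a * b) = \<tau> (b * a)"
    and "\<forall>c\<in>J. cstar c * c \<in> J \<and> \<tau> (cstar c * c) = 0 \<longrightarrow> c = 0"
  shows "quasi_directly_finite TYPE('a)"
proof -
  interpret faithful_trace J \<tau>
    using assms(1,3-6) by unfold_locales
  show ?thesis
    using assms(2) quasi_inverse_two_sided by (rule quasi_directly_finite_if_dense)
qed

end
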